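(* Let $n,t\ge1$, $q\ge 2$, $b\ge1$ and $\boldsymbol{x}=x_1\cdots x_n\in\Sigma_q^n$. Then $\mathcal{I}_{t,b}(\boldsymbol{x})$ is the disjoint union $\bigsqcup_{\alpha\in\Sigma_q}\mathcal{I}_{t,b}(\boldsymbol{x})^{\alpha}$, where \[ \mathcal{I}_{t,b}(\boldsymbol{x})^{x_1}=x_1\circ\mathcal{I}_{t,b}(x_2\cdots x_n),\qquad \mathcal{I}_{t,b}(\boldsymbol{x})^{\alpha}=\alpha\circ\Sigma_q^{b-1}\circ\mathcal{I}_{t-1,b}(\boldsymbol{x})\ \text{ for }\alpha\in\Sigma_q\setminus\{x_1\}. \]
   Context: $\Sigma_q=\{0,\ldots,q-1\}$. A $b$-burst-insertion at position $i\in[1,n+1]$ transforms $x_1\cdots x_n$ into $x_1\cdots x_{i-1}y_1\cdots y_b x_i\cdots x_n$ for arbitrary $y_1\cdots y_b\in\Sigma_q^b$. $\mathcal{I}_{t,b}(\boldsymbol{x})$ is the set of all length-$(n+tb)$ sequences obtainable from $\boldsymbol{x}$ by $t$ successive $b$-burst-insertions ($\mathcal{I}_{0,b}(\boldsymbol{x})=\{\boldsymbol{x}\}$; for the empty sequence, $\mathcal{I}_{t,b}=\Sigma_q^{tb}$). For a set $\mathcal{S}$ of sequences, $\mathcal{S}^{\boldsymbol{u}}$ is the set of sequences in $\mathcal{S}$ starting with $\boldsymbol{u}$; $\circ$ denotes concatenation, extended to sets elementwise. *)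

theory Defs
  imports Main "HOL-Library.Sublist"
begin

definition seqs :: "nat \<Rightarrow> nat \<Rightarrow> nat list set" where
  "seqs q n = {xs. length xs = n \<and> set xs \<subseteq> {..<q}}"

text \<open>All results of one b-burst-insertion into xs (insertion before the (i+1)-th symbol,
  i = 0..length xs, i.e. positions 1..n+1 of the paper).\<close>
definition burst_ins :: "nat \<Rightarrow> nat \<Rightarrow> nat list \<Rightarrow> nat list set" where
  "burst_ins q b xs = {take i xs @ ys @ drop i xs | i ys. i \<le> length xs \<and> ys \<in> seqs q b}"

fun ins_ball :: "nat \<Rightarrow> nat \<Rightarrow> nat \<Rightarrow> nat list \<Rightarrow> nat list set" where
  "ins_ball q 0 b xs = {xs}"
| "ins_ball q (Suc t) b xs = (\<Union>ys \<in> ins_ball q t b xs. burst_ins q b ys)"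

text \<open>S^u: the sequences of S starting with u.\<close>
definition starting :: "nat list set \<Rightarrow> nat list \<Rightarrow> nat list set" where
  "starting S u = {s \<in> S. prefix u s}"

definition conc :: "nat list set \<Rightarrow> nat list set \<Rightarrow> nat list set" where
  "conc A B = {a @ c | a c. a \<in> A \<and> c \<in> B}"

end

theory Submission
  imports Defs
begin

text \<open>Every burst-insertion into \<open>a # u\<close> either inserts in front of \<open>a\<close> or keeps \<open>a\<close> as the
  first symbol, and every burst-insertion into \<open>p @ w\<close> is, after re-cutting the sequence after
  \<open>length p\<close> symbols, a burst-insertion into \<open>w\<close> behind a new prefix of the same length. Hence
  \<open>I\<^sub>t\<^sub>+\<^sub>1(a # xs)\<close> is the union of \<open>a \<circ> I\<^sub>t\<^sub>+\<^sub>1(xs)\<close> and \<open>\<Sigma>\<^sub>q\<^sup>b \<circ> I\<^sub>t(a # xs)\<close>. Reading off the first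
  symbol gives the theorem; for the first symbol \<open>a\<close> the second part is absorbed into the first,
  since \<open>v @ a # xs\<close> is itself one burst-insertion into \<open>xs\<close>.\<close>

lemma mem_conc_iff: "y \<in> conc A B \<longleftrightarrow> (\<exists>a\<in>A. \<exists>c\<in>B. y = a @ c)"
  by (auto simp: conc_def)

lemma conc_mono: "A \<subseteq> A' \<Longrightarrow> B \<subseteq> B' \<Longrightarrow> conc A B \<subseteq> conc A' B'"
  by (auto simp: conc_def)

lemma seqs_take_drop:
  assumes "r \<in> seqs q n" and "m \<le> n"
  shows "take m r \<in> seqs q m" and "drop m r \<in> seqs q (n - m)"
  using assms set_take_subset[of m r] set_drop_subset[of m r] by (auto simp: seqs_def)

lemma burst_ins_subset_seqs: "u \<in> seqs q m \<Longrightarrow> burst_ins q b u \<subseteq> seqs q (m + b)"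
  using set_take_subset set_drop_subset by (fastforce simp: burst_ins_def seqs_def)

lemma ins_ball_subset_seqs: "x \<in> seqs q n \<Longrightarrow> ins_ball q t b x \<subseteq> seqs q (n + t * b)"
proof (induction t)
  case (Suc t)
  then show ?case
    using burst_ins_subset_seqs[of _ q "n + t * b" b] by (fastforce simp: algebra_simps)
qed simp

lemma prepend_in_burst_ins: "p \<in> seqs q b \<Longrightarrow> p @ u \<in> burst_ins q b u"
  unfolding burst_ins_def by (intro CollectI exI[of _ 0] exI[of _ p]) auto

lemma append_in_burst_ins: "w \<in> burst_ins q b u \<Longrightarrow> p @ w \<in> burst_ins q b (p @ u)"
proof -
  assume "w \<in> burst_ins q b u"
  then obtain i ys where "w = take i u @ ys @ drop i u" "i \<le> length u" "ys \<in> seqs q b"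
    by (auto simp: burst_ins_def)
  then show ?thesis
    unfolding burst_ins_def
    by (intro CollectI exI[of _ "length p + i"] exI[of _ ys]) auto
qed

lemma append_in_ins_ball: "w \<in> ins_ball q t b x \<Longrightarrow> p @ w \<in> ins_ball q t b (p @ x)"
proof (induction t arbitrary: w)
  case (Suc t)
  then show ?case using append_in_burst_ins by fastforce
qed simp

lemma ins_ball_trans:
  "u \<in> ins_ball q r b x \<Longrightarrow> v \<in> ins_ball q s b u \<Longrightarrow> v \<in> ins_ball q (s + r) b x"
  by (induction s arbitrary: v) auto

lemma burst_ins_Cons:
  "burst_ins q b (a # u) = conc (seqs q b) {a # u} \<union> conc {[a]} (burst_ins q b u)"
proof (intro equalityI subsetI)
  fix y assume "y \<in> burst_ins q b (a # u)"
  then obtain i ys where y: "y = take i (a # u) @ ys @ drop i (a # u)"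
    and i: "i \<le> Suc (length u)" and ys: "ys \<in> seqs q b"
    by (auto simp: burst_ins_def)
  show "y \<in> conc (seqs q b) {a # u} \<union> conc {[a]} (burst_ins q b u)"
  proof (cases i)
    case 0
    then show ?thesis using y ys by (auto simp: mem_conc_iff)
  next
    case (Suc j)
    then have "take j u @ ys @ drop j u \<in> burst_ins q b u"
      using i ys by (auto simp: burst_ins_def)
    then show ?thesis using y Suc by (auto simp: mem_conc_iff)
  qed
next
  fix y assume "y \<in> conc (seqs q b) {a # u} \<union> conc {[a]} (burst_ins q b u)"
  then show "y \<in> burst_ins q b (a # u)"
    using prepend_in_burst_ins append_in_burst_ins[of _ q b u "[a]"]
    by (auto simp: mem_conc_iff)
qed

lemma burst_ins_append_subset:
  assumes p: "p \<in> seqs q m"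
  shows "burst_ins q b (p @ w) \<subseteq> conc (seqs q m) (burst_ins q b w)"
proof
  fix y assume "y \<in> burst_ins q b (p @ w)"
  then obtain i ys where y: "y = take i (p @ w) @ ys @ drop i (p @ w)"
    and i: "i \<le> length (p @ w)" and ys: "ys \<in> seqs q b"
    by (auto simp: burst_ins_def)
  show "y \<in> conc (seqs q m) (burst_ins q b w)"
  proof (cases "m \<le> i")
    case True
    have "take (i - m) w @ ys @ drop (i - m) w \<in> burst_ins q b w"
      using i ys True p unfolding burst_ins_def
      by (intro CollectI exI[of _ "i - m"] exI[of _ ys]) (auto simp: seqs_def)
    moreover have "y = p @ take (i - m) w @ ys @ drop (i - m) w"
      using y True p by (simp add: seqs_def)
    ultimately show ?thesis using p by (auto simp: mem_conc_iff)
  next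
    case False
    text \<open>The insertion lands inside \<open>p\<close>: the first \<open>m\<close> symbols of \<open>r\<close> form the new prefix,
      its last \<open>b\<close> symbols are a burst in front of \<open>w\<close>.\<close>
    define r where "r = take i p @ ys @ drop i p"
    have r: "r \<in> seqs q (m + b)"
      using p ys False set_take_subset[of i p] set_drop_subset[of i p]
      by (auto simp: r_def seqs_def)
    have "y = r @ w"
      using y False p by (simp add: r_def seqs_def)
    then have "y = take m r @ drop m r @ w" by simp
    moreover have "drop m r @ w \<in> burst_ins q b w"
      using prepend_in_burst_ins seqs_take_drop(2)[OF r, of m] by simp
    ultimately show ?thesis using seqs_take_drop(1)[OF r, of m] by (auto simp: mem_conc_iff)
  qed
qed

lemma ins_ball_Suc_Cons_subset:
  "ins_ball q (Suc t) b (a # xs)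
     \<subseteq> conc {[a]} (ins_ball q (Suc t) b xs) \<union> conc (seqs q b) (ins_ball q t b (a # xs))"
proof (induction t)
  case 0
  show ?case by (simp add: burst_ins_Cons)
next
  case (Suc t)
  have "burst_ins q b u \<subseteq> conc {[a]} (ins_ball q (Suc (Suc t)) b xs)
                            \<union> conc (seqs q b) (ins_ball q (Suc t) b (a # xs))"
    if u: "u \<in> ins_ball q (Suc t) b (a # xs)" for u
  proof -
    from subsetD[OF Suc.IH u] show ?thesis
    proof (elim UnE)
      assume "u \<in> conc {[a]} (ins_ball q (Suc t) b xs)"
      then obtain u' where u': "u = a # u'" "u' \<in> ins_ball q (Suc t) b xs"
        by (auto simp: mem_conc_iff simp del: ins_ball.simps)
      have "burst_ins q b u' \<subseteq> ins_ball q (Suc (Suc t)) b xs"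
        using u'(2) by auto
      then have "conc {[a]} (burst_ins q b u') \<subseteq> conc {[a]} (ins_ball q (Suc (Suc t)) b xs)"
        by (rule conc_mono[OF order_refl])
      moreover have "conc (seqs q b) {u} \<subseteq> conc (seqs q b) (ins_ball q (Suc t) b (a # xs))"
        using u by (intro conc_mono) auto
      ultimately show ?thesis
        using u'(1) by (auto simp: burst_ins_Cons simp del: ins_ball.simps)
    next
      assume "u \<in> conc (seqs q b) (ins_ball q t b (a # xs))"
      then obtain p w where pw: "u = p @ w" "p \<in> seqs q b" "w \<in> ins_ball q t b (a # xs)"
        by (auto simp: mem_conc_iff simp del: ins_ball.simps)
      have "burst_ins q b w \<subseteq> ins_ball q (Suc t) b (a # xs)"
        using pw(3) by auto
      then have "conc (seqs q b) (burst_ins q b w) \<subseteq> conc (seqs q b) (ins_ball q (Suc t) b (a # xs))"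
        by (rule conc_mono[OF order_refl])
      with burst_ins_append_subset[OF pw(2)] show ?thesis
        unfolding pw(1) by blast
    qed
  qed
  then show ?case
    unfolding ins_ball.simps(2)[of q "Suc t" b "a # xs"] by blast
qed

lemma ins_ball_Suc_Cons:
  "ins_ball q (Suc t) b (a # xs)
     = conc {[a]} (ins_ball q (Suc t) b xs) \<union> conc (seqs q b) (ins_ball q t b (a # xs))"
proof (rule equalityI[OF ins_ball_Suc_Cons_subset], intro subsetI, elim UnE)
  fix y assume "y \<in> conc {[a]} (ins_ball q (Suc t) b xs)"
  then show "y \<in> ins_ball q (Suc t) b (a # xs)"
    using append_in_ins_ball[of _ q "Suc t" b xs "[a]"]
    by (auto simp: mem_conc_iff simp del: ins_ball.simps)
next
  fix y assume "y \<in> conc (seqs q b) (ins_ball q t b (a # xs))"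
  then show "y \<in> ins_ball q (Suc t) b (a # xs)"
    using prepend_in_burst_ins by (fastforce simp: mem_conc_iff)
qed

lemma conc_seqs_ins_ball_Cons_subset:
  assumes "a < q" and "b \<ge> 1"
  shows "conc (seqs q (b - 1)) (ins_ball q t b (a # xs)) \<subseteq> ins_ball q (Suc t) b xs"
proof
  fix y assume "y \<in> conc (seqs q (b - 1)) (ins_ball q t b (a # xs))"
  then obtain v w where y: "y = v @ w" and v: "v \<in> seqs q (b - 1)"
    and w: "w \<in> ins_ball q t b (a # xs)"
    by (auto simp: mem_conc_iff)
  have "v @ [a] \<in> seqs q b" using v assms by (auto simp: seqs_def)
  then have "v @ a # xs \<in> ins_ball q 1 b xs"
    using prepend_in_burst_ins[of "v @ [a]"] by simp
  moreover have "v @ w \<in> ins_ball q t b (v @ a # xs)"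
    using append_in_ins_ball[OF w] by simp
  ultimately show "y \<in> ins_ball q (Suc t) b xs"
    using ins_ball_trans y by fastforce
qed

lemma starting_Un: "starting (A \<union> B) u = starting A u \<union> starting B u"
  by (auto simp: starting_def)

lemma starting_disjoint: "\<alpha> \<noteq> \<beta> \<Longrightarrow> starting A [\<alpha>] \<inter> starting A [\<beta>] = {}"
  by (auto simp: starting_def prefix_def)

lemma starting_conc_singleton:
  "starting (conc {[a]} A) [\<alpha>] = (if \<alpha> = a then conc {[a]} A else {})"
  by (auto simp: starting_def mem_conc_iff)

lemma starting_conc_seqs:
  assumes "\<alpha> < q" and "b \<ge> 1"
  shows "starting (conc (seqs q b) W) [\<alpha>] = conc {[\<alpha>]} (conc (seqs q (b - 1)) W)"
proof (intro equalityI subsetI)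
  fix y assume "y \<in> starting (conc (seqs q b) W) [\<alpha>]"
  then obtain p w where y: "y = p @ w" "prefix [\<alpha>] y" and p: "p \<in> seqs q b" and w: "w \<in> W"
    by (auto simp: starting_def mem_conc_iff)
  obtain p' where "p = \<alpha> # p'"
    using y p assms(2) by (cases p) (auto simp: seqs_def)
  with p have "p' \<in> seqs q (b - 1)" by (auto simp: seqs_def)
  with \<open>p = \<alpha> # p'\<close> y w show "y \<in> conc {[\<alpha>]} (conc (seqs q (b - 1)) W)"
    by (auto simp: mem_conc_iff)
next
  fix y assume "y \<in> conc {[\<alpha>]} (conc (seqs q (b - 1)) W)"
  then obtain v w where y: "y = (\<alpha> # v) @ w" and v: "v \<in> seqs q (b - 1)" and w: "w \<in> W"
    by (auto simp: mem_conc_iff)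
  have "\<alpha> # v \<in> seqs q b" using v assms by (auto simp: seqs_def)
  with y w have "y \<in> conc (seqs q b) W"
    unfolding mem_conc_iff by blast
  with y show "y \<in> starting (conc (seqs q b) W) [\<alpha>]"
    by (simp add: starting_def)
qed

lemma ins_ball_eq_Union_starting:
  assumes "x \<in> seqs q n" and "n + t * b \<ge> 1"
  shows "ins_ball q t b x = (\<Union>\<alpha> \<in> {..<q}. starting (ins_ball q t b x) [\<alpha>])"
proof (intro equalityI subsetI)
  fix y assume y: "y \<in> ins_ball q t b x"
  then have "y \<in> seqs q (n + t * b)" using ins_ball_subset_seqs[OF assms(1)] by blast
  with assms(2) obtain c y' where "y = c # y'" "c < q"
    by (cases y) (auto simp: seqs_def)
  with y show "y \<in> (\<Union>\<alpha> \<in> {..<q}. starting (ins_ball q t b x) [\<alpha>])"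
    by (auto simp: starting_def)
qed (auto simp: starting_def)

theorem claim1:
  fixes q n t b :: nat and x :: "nat list"
  assumes "n \<ge> 1" and "t \<ge> 1" and "q \<ge> 2" and "b \<ge> 1"
    and "x \<in> seqs q n"
  shows "ins_ball q t b x = (\<Union>\<alpha> \<in> {..<q}. starting (ins_ball q t b x) [\<alpha>])
    \<and> (\<forall>\<alpha> \<in> {..<q}. \<forall>\<beta> \<in> {..<q}. \<alpha> \<noteq> \<beta> \<longrightarrow>
          starting (ins_ball q t b x) [\<alpha>] \<inter> starting (ins_ball q t b x) [\<beta>] = {})
    \<and> starting (ins_ball q t b x) [hd x] = conc {[hd x]} (ins_ball q t b (tl x))
    \<and> (\<forall>\<alpha> \<in> {..<q} - {hd x}. starting (ins_ball q t b x) [\<alpha>]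
          = conc {[\<alpha>]} (conc (seqs q (b - 1)) (ins_ball q (t - 1) b x)))"
proof -
  obtain a xs where x: "x = a # xs" and a: "a < q"
    using assms(1,5) by (cases x) (auto simp: seqs_def)
  obtain s where t: "t = Suc s" using assms(2) by (cases t) auto
  have starting_eq: "starting (ins_ball q t b x) [\<alpha>]
      = (if \<alpha> = a then conc {[a]} (ins_ball q t b xs) else {})
        \<union> conc {[\<alpha>]} (conc (seqs q (b - 1)) (ins_ball q (t - 1) b x))" if "\<alpha> < q" for \<alpha>
    unfolding x t ins_ball_Suc_Cons starting_Un starting_conc_singleton
      starting_conc_seqs[OF that assms(4)] by (simp del: ins_ball.simps)
  have "conc {[a]} (conc (seqs q (b - 1)) (ins_ball q (t - 1) b x))
          \<subseteq> conc {[a]} (ins_ball q t b xs)"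
    unfolding x t using conc_seqs_ins_ball_Cons_subset[OF a assms(4)]
    by (simp del: ins_ball.simps add: conc_mono)
  then have "starting (ins_ball q t b x) [hd x] = conc {[hd x]} (ins_ball q t b (tl x))"
    using starting_eq[OF a] by (auto simp: x simp del: ins_ball.simps)
  moreover have "starting (ins_ball q t b x) [\<alpha>]
      = conc {[\<alpha>]} (conc (seqs q (b - 1)) (ins_ball q (t - 1) b x))" if "\<alpha> \<in> {..<q} - {hd x}" for \<alpha>
    using that starting_eq[of \<alpha>] by (simp add: x del: ins_ball.simps)
  moreover have "ins_ball q t b x = (\<Union>\<alpha> \<in> {..<q}. starting (ins_ball q t b x) [\<alpha>])"
    using ins_ball_eq_Union_starting[OF assms(5)] assms(1) by simp
  ultimately show ?thesis
    using starting_disjoint by blast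
qed

end
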